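(* Let $(g,\gamma)$ be a construction pair on an abelian group $(X,+)$ and let $r=r(g,\gamma)$. If the order $|g|$ of the permutation $g$ is finite, then $r$ divides $3|g|$. If moreover $\mathrm{Rad}(\gamma)$ contains no elements of order $3$, then $r$ divides $|g|$.
   Context: A map $\gamma:X\times X\to X$ is symmetric if $\gamma(x,y)=\gamma(y,x)$, alternating if $\gamma(x,x)=0$, biadditive if additive in each argument; $\mathrm{Rad}(\gamma)=\{x\in X:\gamma(x,y)=0\ \forall y\in X\}$. A construction pair on $(X,+)$ is a pair $(g,\gamma)$ with $g$ a permutation of $X$ and $\gamma$ symmetric, alternating, biadditive, such that for all $x,y,z\in X$: (C1) $g^{-1}(g(x)+g(y))=x+y+\gamma(x,y)+g^{-1}(\gamma(x,y))+g^{-2}(\gamma(x,y))$; (C2) $\gamma(\gamma(x,y),z)=0$; (C3) $g^{-1}(\gamma(x,y))=\gamma(g(x),y)$. $r(g,\gamma)$ is the least positive integer $r$ such that $\sum_{0\le k<r}g^k(x)\in\mathrm{Rad}(\gamma)$ for all $x\in X$, or $\infty$ if none exists. *)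

theory Defs
  imports Main "HOL-Library.Extended_Nat"
begin

definition symmetric_map :: "('a \<Rightarrow> 'a \<Rightarrow> 'a) \<Rightarrow> bool" where
  "symmetric_map \<gamma> \<longleftrightarrow> (\<forall>x y. \<gamma> x y = \<gamma> y x)"

definition alternating_map :: "('a::zero \<Rightarrow> 'a \<Rightarrow> 'a) \<Rightarrow> bool" where
  "alternating_map \<gamma> \<longleftrightarrow> (\<forall>x. \<gamma> x x = 0)"

definition biadditive :: "('a::plus \<Rightarrow> 'a \<Rightarrow> 'a) \<Rightarrow> bool" where
  "biadditive \<gamma> \<longleftrightarrow> (\<forall>x y z. \<gamma> (x + y) z = \<gamma> x z + \<gamma> y z)
                     \<and> (\<forall>x y z. \<gamma> x (y + z) = \<gamma> x y + \<gamma> x z)"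

definition Rad :: "('a \<Rightarrow> 'a \<Rightarrow> 'a::zero) \<Rightarrow> 'a set" where
  "Rad \<gamma> = {x. \<forall>y. \<gamma> x y = 0}"

definition construction_pair :: "('a::ab_group_add \<Rightarrow> 'a) \<Rightarrow> ('a \<Rightarrow> 'a \<Rightarrow> 'a) \<Rightarrow> bool" where
  "construction_pair g \<gamma> \<longleftrightarrow>
     bij g \<and> symmetric_map \<gamma> \<and> alternating_map \<gamma> \<and> biadditive \<gamma> \<and>
     (\<forall>x y. inv g (g x + g y) = x + y + \<gamma> x y + inv g (\<gamma> x y) + (inv g ^^ 2) (\<gamma> x y)) \<and>
     (\<forall>x y z. \<gamma> (\<gamma> x y) z = 0) \<and>
     (\<forall>x y. inv g (\<gamma> x y) = \<gamma> (g x) y)"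

definition r_of :: "('a::ab_group_add \<Rightarrow> 'a) \<Rightarrow> ('a \<Rightarrow> 'a \<Rightarrow> 'a) \<Rightarrow> enat" where
  "r_of g \<gamma> = (if \<exists>r>0. \<forall>x. (\<Sum>k<r. (g ^^ k) x) \<in> Rad \<gamma>
               then enat (LEAST r. r > 0 \<and> (\<forall>x. (\<Sum>k<r. (g ^^ k) x) \<in> Rad \<gamma>))
               else \<infinity>)"

definition finite_order :: "('a \<Rightarrow> 'a) \<Rightarrow> bool" where
  "finite_order g \<longleftrightarrow> (\<exists>n>0. g ^^ n = id)"

definition perm_order :: "('a \<Rightarrow> 'a) \<Rightarrow> nat" where
  "perm_order g = (LEAST n. n > 0 \<and> g ^^ n = id)"

end

theory Submission
  imports Defs
begin

text \<open>Write h for the inverse of g. By (C3), gamma (g^k x) y = h^k (gamma x y), so the orbit sum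
  of x over r steps lies in the radical iff sum_{i<r} h^i (gamma x y) = 0 for all y; the set of such r
  is closed under differences, hence r(g, gamma) divides each of them. Iterating (C1) n = |g| times
  gives a + b = a + b + sum_{i<3n} h^i (gamma a b), so 3n is such an r. As h^n = id, this sum is three
  times the radical element sum_{i<n} h^i (gamma a b), which must vanish when the radical has no
  3-torsion; then n is such an r as well.\<close>

lemma sum_lessThan_add:
  fixes f :: "nat \<Rightarrow> 'a::comm_monoid_add"
  shows "(\<Sum>i<a + b. f i) = (\<Sum>i<a. f i) + (\<Sum>i<b. f (a + i))"
  by (induction b) (simp_all add: add.assoc)

lemma sum_lessThan_triple_period:
  fixes f :: "nat \<Rightarrow> 'a::comm_monoid_add"
  assumes "\<And>i. f (n + i) = f i"
  shows "(\<Sum>i<3 * n. f i) = (\<Sum>i<n. f i) + (\<Sum>i<n. f i) + (\<Sum>i<n. f i)"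
proof -
  have "3 * n = n + (n + n)" by simp
  then show ?thesis
    using sum_lessThan_add[of f n "n + n"] sum_lessThan_add[of "\<lambda>i. f (n + i)" n n]
    by (simp only: assms add.assoc)
qed

lemma Least_dvd_if_diff_closed:
  fixes P :: "nat \<Rightarrow> bool"
  assumes diff: "\<And>a b. P a \<Longrightarrow> P (a + b) \<Longrightarrow> P b"
    and "P m" "0 < m"
  shows "(LEAST r. 0 < r \<and> P r) dvd m"
proof -
  define r where "r = (LEAST r. 0 < r \<and> P r)"
  have r: "0 < r" "P r" using LeastI[of "\<lambda>r. 0 < r \<and> P r" m] assms(2,3) by (auto simp: r_def)
  have "P k \<Longrightarrow> r dvd k" for k
  proof (induction k rule: less_induct)
    case (less k)
    show ?case
    proof (cases "k = 0")
      case False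
      then have "r \<le> k" using Least_le[of "\<lambda>r. 0 < r \<and> P r" k] less.prems by (simp add: r_def)
      then have "P (k - r)" using diff[of r "k - r"] r less.prems by simp
      then have "r dvd k - r" using less.IH r \<open>r \<le> k\<close> by simp
      then show ?thesis using \<open>r \<le> k\<close> by (simp add: dvd_minus_self)
    qed simp
  qed
  then show ?thesis using assms(2) by (simp add: r_def)
qed

lemma biadditive_zero_left:
  fixes \<gamma> :: "'a::ab_group_add \<Rightarrow> 'a \<Rightarrow> 'a"
  assumes "biadditive \<gamma>"
  shows "\<gamma> 0 y = 0"
  using assms unfolding biadditive_def by (metis add_0 add_cancel_right_right)

lemma biadditive_sum_left:
  fixes \<gamma> :: "'a::ab_group_add \<Rightarrow> 'a \<Rightarrow> 'a"
  assumes "biadditive \<gamma>"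
  shows "\<gamma> (\<Sum>i\<in>A. f i) y = (\<Sum>i\<in>A. \<gamma> (f i) y)"
proof (induction A rule: infinite_finite_induct)
  case (infinite A)
  then show ?case using biadditive_zero_left[OF assms] by simp
next
  case empty
  then show ?case using biadditive_zero_left[OF assms] by simp
next
  case (insert i A)
  then show ?case using assms by (simp add: biadditive_def)
qed

lemma Rad_sum:
  fixes \<gamma> :: "'a::ab_group_add \<Rightarrow> 'a \<Rightarrow> 'a"
  assumes "biadditive \<gamma>" "\<And>i. i \<in> A \<Longrightarrow> f i \<in> Rad \<gamma>"
  shows "(\<Sum>i\<in>A. f i) \<in> Rad \<gamma>"
  using assms by (simp add: Rad_def biadditive_sum_left)

lemma Rad_diff:
  fixes \<gamma> :: "'a::ab_group_add \<Rightarrow> 'a \<Rightarrow> 'a"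
  assumes "biadditive \<gamma>" "u \<in> Rad \<gamma>" "v \<in> Rad \<gamma>"
  shows "u - v \<in> Rad \<gamma>"
proof -
  have "\<gamma> (u - v) y = \<gamma> u y - \<gamma> v y" for y
    using assms(1) unfolding biadditive_def by (metis add_diff_cancel diff_add_cancel)
  then show ?thesis using assms(2,3) by (simp add: Rad_def)
qed

locale construction_pair_ctx =
  fixes g :: "'a::ab_group_add \<Rightarrow> 'a" and \<gamma> :: "'a \<Rightarrow> 'a \<Rightarrow> 'a"
  assumes construction_pair: "construction_pair g \<gamma>"
begin

abbreviation h :: "'a \<Rightarrow> 'a" where "h \<equiv> inv g"

lemma bij_g: "bij g"
  and biadditive: "biadditive \<gamma>"
  and sym: "\<gamma> x y = \<gamma> y x"
  and inv_add_image: "h (g x + g y) = x + y + (\<Sum>j<3. (h ^^ j) (\<gamma> x y))"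
  and gamma_gamma: "\<gamma> (\<gamma> x y) z = 0"
  and inv_gamma: "h (\<gamma> x y) = \<gamma> (g x) y"
  using construction_pair
  by (auto simp: construction_pair_def symmetric_map_def numeral_3_eq_3 numeral_2_eq_2 add.assoc)

lemma g_inv_g [simp]: "g (h x) = x"
  using bij_g by (simp add: bij_is_surj surj_f_inv_f)

lemma inv_pow_pow [simp]: "(h ^^ k) ((g ^^ k) x) = x"
  using inv_fn_o_fn_is_id[OF bij_g] by (metis comp_apply)

lemma pow_inv_pow [simp]: "(g ^^ k) ((h ^^ k) x) = x"
  using fn_o_inv_fn_is_id[OF bij_g] by (metis comp_apply)

lemma inv_zero [simp]: "h 0 = 0"
  using inv_gamma[of 0 0] sym[of "g 0" 0] biadditive_zero_left[OF biadditive] by simp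

lemma g_zero [simp]: "g 0 = 0"
  using g_inv_g[of 0] by simp

lemma inv_pow_zero [simp]: "(h ^^ k) 0 = 0"
  by (induction k) simp_all

lemma gamma_in_Rad: "\<gamma> x y \<in> Rad \<gamma>"
  by (simp add: Rad_def gamma_gamma)

lemma inv_Rad: "u \<in> Rad \<gamma> \<Longrightarrow> h u \<in> Rad \<gamma>"
proof -
  assume "u \<in> Rad \<gamma>"
  then have "h (\<gamma> (h u) y) = 0" for y
    using inv_gamma[of "h u" y] by (simp add: Rad_def)
  then have "\<gamma> (h u) y = 0" for y
    using g_inv_g[of "\<gamma> (h u) y"] by simp
  then show ?thesis by (simp add: Rad_def)
qed

lemma inv_pow_Rad: "u \<in> Rad \<gamma> \<Longrightarrow> (h ^^ k) u \<in> Rad \<gamma>"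
  by (induction k) (simp_all add: inv_Rad)

lemma inv_add_Rad: "q \<in> Rad \<gamma> \<Longrightarrow> h (p + q) = h p + h q"
  using inv_add_image[of "h p" "h q"] inv_Rad[of q] sym[of "h p" "h q"]
  by (simp add: Rad_def inv_pow_Rad biadditive_zero_left[OF biadditive])

lemma inv_pow_add_Rad: "q \<in> Rad \<gamma> \<Longrightarrow> (h ^^ k) (p + q) = (h ^^ k) p + (h ^^ k) q"
  by (induction k) (simp_all add: inv_add_Rad inv_pow_Rad)

lemma inv_pow_sum_Rad:
  fixes m :: nat
  assumes "\<And>i. i < m \<Longrightarrow> f i \<in> Rad \<gamma>"
  shows "(h ^^ k) (\<Sum>i<m. f i) = (\<Sum>i<m. (h ^^ k) (f i))"
  using assms
proof (induction m)
  case (Suc m)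
  then show ?case by (simp add: inv_pow_add_Rad)
qed simp

lemma gamma_pow_left: "\<gamma> ((g ^^ k) x) y = (h ^^ k) (\<gamma> x y)"
  by (induction k) (simp_all add: inv_gamma[symmetric])

lemma gamma_pow_pow: "\<gamma> ((g ^^ k) x) ((g ^^ k) y) = (h ^^ (2 * k)) (\<gamma> x y)"
proof -
  have "\<gamma> ((g ^^ k) x) ((g ^^ k) y) = (h ^^ k) (\<gamma> ((g ^^ k) y) x)"
    by (simp only: gamma_pow_left sym[of x])
  also have "\<dots> = (h ^^ (2 * k)) (\<gamma> x y)"
    by (simp only: gamma_pow_left sym[of y] mult_2 funpow_add comp_apply)
  finally show ?thesis .
qed

lemma inv_pow_add_pow:
  "(h ^^ k) ((g ^^ k) a + (g ^^ k) b) = a + b + (\<Sum>i<3 * k. (h ^^ i) (\<gamma> a b))"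
proof (induction k)
  case (Suc k)
  define e where "e = \<gamma> a b"
  let ?A = "(g ^^ k) a" and ?B = "(g ^^ k) b"
  have Rad: "(h ^^ j) (\<gamma> ?A ?B) \<in> Rad \<gamma>" for j
    by (simp add: inv_pow_Rad gamma_in_Rad)
  have shift: "(h ^^ k) ((h ^^ j) (\<gamma> ?A ?B)) = (h ^^ (3 * k + j)) e" for j
  proof -
    have "3 * k + j = k + (j + 2 * k)" by simp
    then show ?thesis by (simp only: gamma_pow_pow e_def funpow_add comp_apply)
  qed
  have "(h ^^ Suc k) ((g ^^ Suc k) a + (g ^^ Suc k) b) = (h ^^ k) (h (g ?A + g ?B))"
    by (simp only: funpow_Suc_right[where f = h] funpow.simps(2)[where f = g] comp_apply)
  also have "\<dots> = (h ^^ k) (?A + ?B) + (\<Sum>j<3. (h ^^ k) ((h ^^ j) (\<gamma> ?A ?B)))"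
    by (simp add: inv_add_image inv_pow_add_Rad inv_pow_sum_Rad Rad_sum[OF biadditive] Rad)
  also have "\<dots> = a + b + (\<Sum>i<3 * k. (h ^^ i) e) + (\<Sum>j<3. (h ^^ (3 * k + j)) e)"
    by (simp only: Suc.IH e_def shift)
  also have "\<dots> = a + b + (\<Sum>i<3 * Suc k. (h ^^ i) e)"
    using sum_lessThan_add[of "\<lambda>i. (h ^^ i) e" "3 * k" 3] by (simp add: add.assoc add.commute)
  finally show ?case by (simp add: e_def)
qed simp

lemma orbit_sum_in_Rad_iff:
  "(\<Sum>k<r. (g ^^ k) x) \<in> Rad \<gamma> \<longleftrightarrow> (\<forall>y. (\<Sum>i<r. (h ^^ i) (\<gamma> x y)) = 0)"
  by (simp add: Rad_def biadditive_sum_left[OF biadditive] gamma_pow_left)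

lemma orbit_sum_in_Rad_diff:
  assumes "\<forall>x. (\<Sum>k<a. (g ^^ k) x) \<in> Rad \<gamma>" and "\<forall>x. (\<Sum>k<a + b. (g ^^ k) x) \<in> Rad \<gamma>"
  shows "\<forall>x. (\<Sum>k<b. (g ^^ k) x) \<in> Rad \<gamma>"
proof
  fix x
  let ?x0 = "(h ^^ a) x"
  have "(g ^^ (a + k)) ?x0 = (g ^^ k) x" for k
    by (simp only: add.commute[of a] funpow_add comp_apply pow_inv_pow)
  then have "(\<Sum>k<b. (g ^^ k) x) = (\<Sum>k<a + b. (g ^^ k) ?x0) - (\<Sum>k<a. (g ^^ k) ?x0)"
    using sum_lessThan_add[of "\<lambda>k. (g ^^ k) ?x0" a b] by simp
  then show "(\<Sum>k<b. (g ^^ k) x) \<in> Rad \<gamma>"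
    using assms Rad_diff[OF biadditive] by simp
qed

lemma r_of_dvd:
  assumes "\<forall>x. (\<Sum>k<m. (g ^^ k) x) \<in> Rad \<gamma>" and "0 < m"
  shows "\<exists>r. r_of g \<gamma> = enat r \<and> r dvd m"
proof -
  let ?P = "\<lambda>r. \<forall>x. (\<Sum>k<r. (g ^^ k) x) \<in> Rad \<gamma>"
  have "r_of g \<gamma> = enat (LEAST r. 0 < r \<and> ?P r)"
    using assms unfolding r_of_def by auto
  moreover have "(LEAST r. 0 < r \<and> ?P r) dvd m"
    using Least_dvd_if_diff_closed[of ?P] orbit_sum_in_Rad_diff assms by blast
  ultimately show ?thesis by blast
qed

lemma inv_pow_period: "g ^^ n = id \<Longrightarrow> h ^^ n = id"
  using inv_pow_pow[of n] by (simp add: fun_eq_iff)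

lemma orbit_sum_triple_period_in_Rad:
  assumes "g ^^ n = id"
  shows "(\<Sum>k<3 * n. (g ^^ k) x) \<in> Rad \<gamma>"
proof -
  have "(\<Sum>i<3 * n. (h ^^ i) (\<gamma> x y)) = 0" for y
    using inv_pow_add_pow[of n x y] assms inv_pow_period[OF assms] by simp
  then show ?thesis by (simp add: orbit_sum_in_Rad_iff)
qed

lemma orbit_sum_period_in_Rad:
  assumes "g ^^ n = id" and no_3_torsion: "\<not> (\<exists>u\<in>Rad \<gamma>. u \<noteq> 0 \<and> u + u + u = 0)"
  shows "(\<Sum>k<n. (g ^^ k) x) \<in> Rad \<gamma>"
proof -
  have "(\<Sum>i<n. (h ^^ i) (\<gamma> x y)) = 0" for y
  proof -
    define s where "s = (\<Sum>i<n. (h ^^ i) (\<gamma> x y))"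
    have periodic: "(h ^^ (n + i)) (\<gamma> x y) = (h ^^ i) (\<gamma> x y)" for i
      by (simp add: funpow_add inv_pow_period[OF assms(1)] add.commute[of n])
    have "s \<in> Rad \<gamma>"
      unfolding s_def by (simp add: Rad_sum[OF biadditive] inv_pow_Rad gamma_in_Rad)
    moreover have "s + s + s = 0"
      using orbit_sum_triple_period_in_Rad[OF assms(1), of x]
        sum_lessThan_triple_period[where n = n and f = "\<lambda>i. (h ^^ i) (\<gamma> x y)", OF periodic]
      by (simp add: orbit_sum_in_Rad_iff s_def)
    ultimately show ?thesis using no_3_torsion by (auto simp: s_def)
  qed
  then show ?thesis by (simp add: orbit_sum_in_Rad_iff)
qed

end

theorem mainTheorem3:
  fixes g :: "'a::ab_group_add \<Rightarrow> 'a" and \<gamma> :: "'a \<Rightarrow> 'a \<Rightarrow> 'a"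
  assumes "construction_pair g \<gamma>"
    and "finite_order g"
  shows "(\<exists>r. r_of g \<gamma> = enat r \<and> r dvd 3 * perm_order g) \<and>
         ((\<not> (\<exists>x\<in>Rad \<gamma>. x \<noteq> 0 \<and> x + x + x = 0)) \<longrightarrow>
           (\<exists>r. r_of g \<gamma> = enat r \<and> r dvd perm_order g))"
proof -
  interpret construction_pair_ctx g \<gamma> by unfold_locales (rule assms(1))
  define n where "n = perm_order g"
  have "0 < n" and period: "g ^^ n = id"
    using LeastI_ex[OF assms(2)[unfolded finite_order_def]] by (simp_all add: n_def perm_order_def)
  have "0 < 3 * n" using \<open>0 < n\<close> by simp
  then have "\<exists>r. r_of g \<gamma> = enat r \<and> r dvd 3 * n"
    using orbit_sum_triple_period_in_Rad[OF period] by (intro r_of_dvd) auto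
  moreover have "\<exists>r. r_of g \<gamma> = enat r \<and> r dvd n"
    if "\<not> (\<exists>x\<in>Rad \<gamma>. x \<noteq> 0 \<and> x + x + x = 0)"
    using orbit_sum_period_in_Rad[OF period that] \<open>0 < n\<close> by (intro r_of_dvd) auto
  ultimately show ?thesis by (simp add: n_def)
qed

end
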